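(* Let $(X,\tau)$ be a principal topological space, i.e. arbitrary intersections of open sets are open. The following are equivalent: (i) $(X,\tau)$ is pre-Hausdorff; (ii) $(X,\tau)$ is regular; (iii) $(X,\tau)$ has dimension $0$, i.e. has a basis consisting of clopen sets; (iv) the operator $\neg:\tau\to\tau$ defined by $\neg U = \operatorname{int}(X\setminus U)$ satisfies $\neg\neg U = U$ for every $U\in\tau$ (equivalently, the topos of sheaves on $X$ is Boolean).
   Context: A space is pre-Hausdorff ($T_{0,2}$) if any two points $a,b$ for which some open set contains exactly one of them (a $T_0$-separation) also have disjoint open neighbourhoods. "Regular" means: for every closed set $A$ and point $p\notin A$ there are disjoint open sets $U\ni p$ and $V\supseteq A$; points are not required to be closed. *)

theory Defs
  imports "HOL-Analysis.Analysis"
begin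

text \<open>Principal (Alexandrov) space: arbitrary intersections of open sets are open
 (intersections are taken inside the carrier; the empty family gives the whole space).\<close>
definition principal_space :: "'a topology \<Rightarrow> bool" where
  "principal_space X \<longleftrightarrow>
     (\<forall>\<F>. (\<forall>U\<in>\<F>. openin X U) \<longrightarrow> openin X (topspace X \<inter> \<Inter>\<F>))"

definition pre_Hausdorff_space :: "'a topology \<Rightarrow> bool" where
  "pre_Hausdorff_space X \<longleftrightarrow>
     (\<forall>a\<in>topspace X. \<forall>b\<in>topspace X.
        (\<exists>W. openin X W \<and> (a \<in> W \<longleftrightarrow> b \<notin> W)) \<longrightarrow>
        (\<exists>U V. openin X U \<and> openin X V \<and> a \<in> U \<and> b \<in> V \<and> disjnt U V))"

definition clopen_basis :: "'a topology \<Rightarrow> bool" where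
  "clopen_basis X \<longleftrightarrow>
     (\<exists>\<B>. (\<forall>B\<in>\<B>. openin X B \<and> closedin X B) \<and>
          (\<forall>U. openin X U \<longrightarrow> (\<exists>\<U>. \<U> \<subseteq> \<B> \<and> U = \<Union>\<U>)))"

definition open_neg :: "'a topology \<Rightarrow> 'a set \<Rightarrow> 'a set" where
  "open_neg X U = X interior_of (topspace X - U)"

end

theory Submission
  imports Defs
begin

text \<open>
  Call a space R0 when its specialisation preorder is symmetric: \<open>x \<in> cl {y}\<close> iff
  \<open>y \<in> cl {x}\<close>. Pre-Hausdorffness, regularity and a clopen basis each force R0 in any space,
  since a point \<open>y\<close> with \<open>x \<in> cl {y}\<close> but \<open>y \<notin> cl {x}\<close> cannot be separated from \<open>x\<close> in the
  required way. In a principal space every point \<open>x\<close> has a smallest open neighbourhood \<open>N x\<close>,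
  consisting of the points whose closure contains \<open>x\<close>, and \<open>\<not>\<not>U = int (cl U)\<close>. If R0 fails at
  such \<open>x, y\<close>, then \<open>U = N x - cl {x}\<close> is open and contains \<open>y\<close>, while \<open>N x \<subseteq> cl U\<close>, so
  \<open>x \<in> \<not>\<not>U - U\<close>. Conversely, R0 makes \<open>N x\<close> disjoint from every open set missing \<open>x\<close>, so every
  open set is closed, and then all four properties are immediate.
\<close>

definition R0_space :: "'a topology \<Rightarrow> bool" where
  "R0_space X \<longleftrightarrow>
     (\<forall>x\<in>topspace X. \<forall>y\<in>topspace X. x \<in> X closure_of {y} \<longrightarrow> y \<in> X closure_of {x})"

lemma in_closure_of_singleton:
  "x \<in> X closure_of {y} \<longleftrightarrow> x \<in> topspace X \<and> (\<forall>U. openin X U \<and> x \<in> U \<longrightarrow> y \<in> U)"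
  by (auto simp: in_closure_of)

lemma R0_spaceI:
  assumes "\<And>x y. \<lbrakk>x \<in> topspace X; y \<in> topspace X; x \<in> X closure_of {y}; y \<notin> X closure_of {x}\<rbrakk>
             \<Longrightarrow> False"
  shows "R0_space X"
  using assms unfolding R0_space_def by blast

lemma pre_Hausdorff_imp_R0_space:
  assumes "pre_Hausdorff_space X"
  shows "R0_space X"
proof (rule R0_spaceI)
  fix x y assume xX: "x \<in> topspace X" and y: "y \<in> topspace X" and x: "x \<in> X closure_of {y}"
    and "y \<notin> X closure_of {x}"
  then have "\<exists>W. openin X W \<and> (y \<in> W \<longleftrightarrow> x \<notin> W)"
    by (auto simp: in_closure_of_singleton)
  then obtain U V where "openin X U" "openin X V" "y \<in> U" "x \<in> V" "disjnt U V"
    using assms xX y unfolding pre_Hausdorff_space_def by blast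
  moreover have "y \<in> V"
    using x \<open>openin X V\<close> \<open>x \<in> V\<close> unfolding in_closure_of_singleton by blast
  ultimately show False
    by (auto simp: disjnt_iff)
qed

lemma regular_imp_R0_space:
  assumes "regular_space X"
  shows "R0_space X"
proof (rule R0_spaceI)
  fix x y assume xX: "x \<in> topspace X" and y: "y \<in> topspace X" and x: "x \<in> X closure_of {y}"
    and "y \<notin> X closure_of {x}"
  then obtain U V where "openin X U" "openin X V" "y \<in> U" "X closure_of {x} \<subseteq> V" "disjnt U V"
    using assms unfolding regular_space_def by (meson DiffI closedin_closure_of)
  moreover have "x \<in> V"
    using \<open>X closure_of {x} \<subseteq> V\<close> xX by (auto simp: in_closure_of_singleton)
  ultimately show False
    using x by (auto simp: in_closure_of_singleton disjnt_iff)
qed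

lemma clopen_basis_imp_R0_space:
  assumes "clopen_basis X"
  shows "R0_space X"
proof (rule R0_spaceI)
  fix x y assume xX: "x \<in> topspace X" and y: "y \<in> topspace X" and x: "x \<in> X closure_of {y}"
    and "y \<notin> X closure_of {x}"
  then obtain W where W: "openin X W" "y \<in> W" "x \<notin> W"
    by (auto simp: in_closure_of_singleton)
  obtain \<B> where \<B>: "\<forall>B\<in>\<B>. openin X B \<and> closedin X B"
    "\<And>U. openin X U \<Longrightarrow> \<exists>\<U>. \<U> \<subseteq> \<B> \<and> U = \<Union>\<U>"
    using assms unfolding clopen_basis_def by blast
  obtain \<U> where "\<U> \<subseteq> \<B>" "W = \<Union>\<U>"
    using \<B>(2) W(1) by blast
  then obtain B where "B \<in> \<B>" "y \<in> B" "x \<notin> B"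
    using W by blast
  then have "openin X (topspace X - B)" "x \<in> topspace X - B" "y \<notin> topspace X - B"
    using \<B>(1) xX by (auto simp: closedin_def)
  then show False
    using x unfolding in_closure_of_singleton by blast
qed

lemma open_neg_open_neg: "U \<subseteq> topspace X \<Longrightarrow> open_neg X (open_neg X U) = X interior_of (X closure_of U)"
  unfolding open_neg_def by (simp add: closure_of_complement [symmetric] Diff_Diff_Int Int_absorb1)

definition minimal_nbhd :: "'a topology \<Rightarrow> 'a \<Rightarrow> 'a set" where
  "minimal_nbhd X x = topspace X \<inter> \<Inter>{U. openin X U \<and> x \<in> U}"

lemma openin_minimal_nbhd: "principal_space X \<Longrightarrow> openin X (minimal_nbhd X x)"
  unfolding minimal_nbhd_def principal_space_def by auto

lemma minimal_nbhd_self: "x \<in> topspace X \<Longrightarrow> x \<in> minimal_nbhd X x"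
  unfolding minimal_nbhd_def by auto

lemma in_minimal_nbhd_iff: "x \<in> topspace X \<Longrightarrow> z \<in> minimal_nbhd X x \<longleftrightarrow> x \<in> X closure_of {z}"
  unfolding minimal_nbhd_def in_closure_of_singleton by auto

lemma open_neg_involutive_imp_R0_space:
  assumes X: "principal_space X" and neg: "\<And>U. openin X U \<Longrightarrow> open_neg X (open_neg X U) = U"
  shows "R0_space X"
proof (rule R0_spaceI)
  fix x y assume xX: "x \<in> topspace X" and y: "y \<in> topspace X" and x: "x \<in> X closure_of {y}"
    and yx: "y \<notin> X closure_of {x}"
  define U where "U = minimal_nbhd X x - X closure_of {x}"
  have U: "openin X U"
    by (simp add: U_def openin_diff openin_minimal_nbhd[OF X])
  have "y \<in> U" "x \<notin> U"
    using x xX yx by (simp_all add: U_def in_minimal_nbhd_iff closure_of_subset)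
  have "minimal_nbhd X x \<subseteq> X closure_of U"
  proof
    fix p assume p: "p \<in> minimal_nbhd X x"
    show "p \<in> X closure_of U"
    proof (cases "p \<in> U")
      case True
      then show ?thesis
        using closure_of_subset[OF openin_subset[OF U]] by blast
    next
      case False
      then have "p \<in> X closure_of {x}"
        using p by (simp add: U_def)
      also have "\<dots> \<subseteq> X closure_of {y}"
        using x by (simp add: closure_of_minimal)
      also have "\<dots> \<subseteq> X closure_of U"
        using \<open>y \<in> U\<close> by (simp add: closure_of_mono)
      finally show ?thesis .
    qed
  qed
  then have "minimal_nbhd X x \<subseteq> open_neg X (open_neg X U)"
    by (simp add: open_neg_open_neg openin_subset[OF U] interior_of_maximal openin_minimal_nbhd[OF X])
  then show False
    using neg[OF U] minimal_nbhd_self[OF xX] \<open>x \<notin> U\<close> by blast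
qed

lemma principal_R0_space_imp_closedin:
  assumes X: "principal_space X" and R0: "R0_space X" and U: "openin X U"
  shows "closedin X U"
proof -
  have "minimal_nbhd X x \<subseteq> topspace X - U" if x: "x \<in> topspace X - U" for x
  proof
    fix z assume z: "z \<in> minimal_nbhd X x"
    then have "x \<in> X closure_of {z}"
      using x by (simp add: in_minimal_nbhd_iff)
    moreover have "z \<in> topspace X"
      using z by (simp add: minimal_nbhd_def)
    ultimately have "z \<in> X closure_of {x}"
      using R0 x unfolding R0_space_def by blast
    then show "z \<in> topspace X - U"
      using U x unfolding in_closure_of_singleton by blast
  qed
  then have "openin X (topspace X - U)"
    by (subst openin_subopen) (blast intro: openin_minimal_nbhd[OF X] minimal_nbhd_self)
  then show ?thesis
    using openin_subset[OF U] by (simp add: closedin_def)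
qed

lemma open_imp_closed_imp_pre_Hausdorff:
  assumes "\<And>U. openin X U \<Longrightarrow> closedin X U"
  shows "pre_Hausdorff_space X"
  unfolding pre_Hausdorff_space_def
proof (intro ballI impI)
  fix a b assume "a \<in> topspace X" "b \<in> topspace X" "\<exists>W. openin X W \<and> (a \<in> W \<longleftrightarrow> b \<notin> W)"
  then obtain W where W: "openin X W" "a \<in> W \<longleftrightarrow> b \<notin> W"
    by blast
  have W': "openin X (topspace X - W)"
    using assms W(1) by (simp add: closedin_def)
  show "\<exists>U V. openin X U \<and> openin X V \<and> a \<in> U \<and> b \<in> V \<and> disjnt U V"
  proof (cases "a \<in> W")
    case True
    then show ?thesis
      using W W' \<open>b \<in> topspace X\<close>
      by (intro exI[of _ W] exI[of _ "topspace X - W"]) (auto simp: disjnt_def)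
  next
    case False
    then show ?thesis
      using W W' \<open>a \<in> topspace X\<close>
      by (intro exI[of _ "topspace X - W"] exI[of _ W]) (auto simp: disjnt_def)
  qed
qed

lemma open_imp_closed_imp_regular:
  assumes "\<And>U. openin X U \<Longrightarrow> closedin X U"
  shows "regular_space X"
  unfolding regular_space_def
proof (intro allI impI)
  fix C a assume Ca: "closedin X C \<and> a \<in> topspace X - C"
  then have "openin X (topspace X - C)"
    by (simp add: closedin_def)
  moreover have "closedin X (topspace X - C)"
    using assms calculation .
  moreover have "topspace X - (topspace X - C) = C"
    using Ca closedin_subset by blast
  ultimately have "openin X C"
    by (metis closedin_def)
  then show "\<exists>U V. openin X U \<and> openin X V \<and> a \<in> U \<and> C \<subseteq> V \<and> disjnt U V"
    using \<open>openin X (topspace X - C)\<close> Ca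
    by (intro exI[of _ "topspace X - C"] exI[of _ C]) (auto simp: disjnt_def)
qed

lemma open_imp_closed_imp_clopen_basis:
  assumes "\<And>U. openin X U \<Longrightarrow> closedin X U"
  shows "clopen_basis X"
proof -
  have "\<exists>\<U>. \<U> \<subseteq> {U. openin X U} \<and> U = \<Union>\<U>" if "openin X U" for U
    using that by (intro exI[of _ "{U}"]) auto
  then show ?thesis
    using assms unfolding clopen_basis_def by blast
qed

lemma open_imp_closed_imp_open_neg_involutive:
  assumes "\<And>U. openin X U \<Longrightarrow> closedin X U" and U: "openin X U"
  shows "open_neg X (open_neg X U) = U"
proof -
  have "U \<subseteq> topspace X" "closedin X U"
    using assms openin_subset by auto
  then show ?thesis
    using U by (simp add: open_neg_open_neg closure_of_closedin interior_of_openin)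
qed

theorem theorem2p1:
  fixes X :: "'a topology"
  assumes "principal_space X"
  shows "(pre_Hausdorff_space X \<longleftrightarrow> regular_space X)
       \<and> (regular_space X \<longleftrightarrow> clopen_basis X)
       \<and> (clopen_basis X \<longleftrightarrow> (\<forall>U. openin X U \<longrightarrow> open_neg X (open_neg X U) = U))"
proof -
  have clopen: "openin X U \<Longrightarrow> closedin X U" if "R0_space X" for U
    using principal_R0_space_imp_closedin[OF assms that] .
  have "pre_Hausdorff_space X \<longleftrightarrow> R0_space X"
    using pre_Hausdorff_imp_R0_space open_imp_closed_imp_pre_Hausdorff clopen by blast
  moreover have "regular_space X \<longleftrightarrow> R0_space X"
    using regular_imp_R0_space open_imp_closed_imp_regular clopen by blast
  moreover have "clopen_basis X \<longleftrightarrow> R0_space X"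
    using clopen_basis_imp_R0_space open_imp_closed_imp_clopen_basis clopen by blast
  moreover have "(\<forall>U. openin X U \<longrightarrow> open_neg X (open_neg X U) = U) \<longleftrightarrow> R0_space X"
    using open_neg_involutive_imp_R0_space[OF assms] open_imp_closed_imp_open_neg_involutive clopen
    by blast
  ultimately show ?thesis
    by blast
qed

end
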